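(* There exists $c_\Sigma\in\mathcal C_\Sigma^\vee$ such that, for every $z\in U_\Sigma=\{z\in\mathbb C^n:(-\log|z_1|,\dots,-\log|z_n|)\in\mathcal C_\Sigma^\vee+c_\Sigma,\ \arg z_j\in(-\pi,\pi)\}$, the series $\Phi_\Sigma(z)=\sum_{v\in\mathrm{Box}(\Sigma)}x^v\sum_{l\in\mathbb L}\prod_{j=1}^n\frac{z_j^{l_j+\gamma^v_j+D_j}}{\Gamma(l_j+\gamma^v_j+D_j+1)}$ defines an element of the completion of the graded ring $\mathbb C[K,\Sigma]$; that is, $\Phi_\Sigma$ is a map from $U_\Sigma$ to the completion of $\mathbb C[K,\Sigma]$.
   Context: $N\cong\mathbb Z^d$ lattice, $\mathcal A=\{v_1,\dots,v_n\}\subset N$ generating $N$ with a homomorphism $\mathrm h:N\to\mathbb Z$, $\mathrm h(v_j)=1$; $\mathbb L=\{l\in\mathbb Z^n:\sum l_jv_j=0\}$; $K=\mathbb R_{\ge0}\mathrm{Conv}(\mathcal A)$; $\Sigma$ the simplicial fan supported on $K$ from a regular triangulation of $\mathrm{Conv}(\mathcal A)$ with vertices in $\mathcal A$; $\Sigma(d)$ maximal cones; fix $\beta\in N$. $\mathbb C[K,\Sigma]$: basis $x^w$ ($w\in K\cap N$), $x^{w_1}x^{w_2}=x^{w_1+w_2}$ if some cone of $\Sigma$ contains both, else $0$; graded by $\mathrm h$; its completion is the product of its graded pieces. $\mathrm{Box}(\Sigma)$: $v=\sum q^v_jv_j\in N$, $0\le q^v_j<1$, $q^v_j=0$ unless $v_j$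 spans a ray of a fixed maximal cone. For each $v$ a $\gamma^v\in\mathbb Q^n$ is fixed with $\sum\gamma^v_jv_j=\beta$, $\gamma^v_j-q^v_j\in\mathbb Z$. $D_j=x^{v_j}$ if $\mathbb R_{\ge0}v_j\in\Sigma$, else $0$; each factor is expanded as a power series in $D_j$ by Taylor expansion of $s\mapsto z_j^s/\Gamma(s+1)$ at $s=l_j+\gamma^v_j$, with $z_j^s=e^{s(\log|z_j|+i\arg z_j)}$. $\mathcal C_\sigma=\{x\in\mathbb L\otimes\mathbb R:x_j\ge0$ if $\mathbb R_{\ge0}v_j$ is not a ray of $\sigma\}$, $\mathcal C_\Sigma=\sum_{\sigma\in\Sigma(d)}\mathcal C_\sigma$, $\mathcal C_\Sigma^\vee$ the dual cone in $\mathbb R^n$ under the standard pairing. *)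

theory Defs
  imports "HOL-Analysis.Analysis"
begin

text \<open>Setting: N = int^'d, the generators v_j (j in the finite index type 'n) of A,
  the grading h given by a vector hh, the regular triangulation given by a height function w.\<close>

definition ivec :: "int^'d \<Rightarrow> real^'d" where
  "ivec x = (\<chi> i. real_of_int (x $ i))"

definition rv :: "('n \<Rightarrow> int^'d) \<Rightarrow> 'n \<Rightarrow> real^'d" where
  "rv v j = ivec (v j)"

definition hval :: "int^'d \<Rightarrow> int^'d \<Rightarrow> int" where
  "hval hh x = (\<Sum>i\<in>UNIV. hh $ i * x $ i)"

definition generates :: "('n::finite \<Rightarrow> int^'d::finite) \<Rightarrow> bool" where
  "generates v \<longleftrightarrow> (\<forall>x::int^'d. \<exists>c::'n \<Rightarrow> int. x = (\<chi> i. \<Sum>j\<in>UNIV. c j * v j $ i))"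

text \<open>Maximal cells of the regular subdivision of Conv(A) induced by the heights w
  (index sets of the points on a full-dimensional lower face of the lifted point configuration).\<close>
definition cells :: "('n::finite \<Rightarrow> int^'d::finite) \<Rightarrow> ('n \<Rightarrow> real) \<Rightarrow> 'n set set" where
  "cells v w = {C. \<exists>\<psi>::real^'d. (\<forall>j. \<psi> \<bullet> rv v j \<le> w j) \<and> C = {j. \<psi> \<bullet> rv v j = w j}
                     \<and> span (rv v ` C) = UNIV}"

definition regular_triangulation :: "('n::finite \<Rightarrow> int^'d::finite) \<Rightarrow> ('n \<Rightarrow> real) \<Rightarrow> bool" where
  "regular_triangulation v w \<longleftrightarrow> (\<forall>C\<in>cells v w. inj_on (rv v) C \<and> independent (rv v ` C))"

definition poscomb :: "('n::finite \<Rightarrow> int^'d::finite) \<Rightarrow> 'n set \<Rightarrow> real^'d \<Rightarrow> bool" where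
  "poscomb v C y \<longleftrightarrow> (\<exists>a. (\<forall>j\<in>C. 0 \<le> a j) \<and> y = (\<Sum>j\<in>C. a j *\<^sub>R rv v j))"

definition isray :: "('n::finite \<Rightarrow> int^'d::finite) \<Rightarrow> ('n \<Rightarrow> real) \<Rightarrow> 'n \<Rightarrow> bool" where
  "isray v w j \<longleftrightarrow> (\<exists>C\<in>cells v w. j \<in> C)"

definition box_wit :: "('n::finite \<Rightarrow> int^'d::finite) \<Rightarrow> ('n \<Rightarrow> real) \<Rightarrow> 'n set \<Rightarrow> ('n \<Rightarrow> real) \<Rightarrow> int^'d \<Rightarrow> bool" where
  "box_wit v w C q b \<longleftrightarrow> C \<in> cells v w \<and> (\<forall>j. 0 \<le> q j \<and> q j < 1) \<and> (\<forall>j. j \<notin> C \<longrightarrow> q j = 0)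
      \<and> ivec b = (\<Sum>j\<in>UNIV. q j *\<^sub>R rv v j)"

definition Box :: "('n::finite \<Rightarrow> int^'d::finite) \<Rightarrow> ('n \<Rightarrow> real) \<Rightarrow> (int^'d) set" where
  "Box v w = {b. \<exists>C q. box_wit v w C q b}"

definition Lat :: "('n::finite \<Rightarrow> int^'d::finite) \<Rightarrow> ('n \<Rightarrow> int) set" where
  "Lat v = {l. (\<chi> i. \<Sum>j\<in>UNIV. l j * v j $ i) = 0}"

definition LR :: "('n::finite \<Rightarrow> int^'d::finite) \<Rightarrow> (real^'n) set" where
  "LR v = {x. (\<Sum>j\<in>UNIV. x $ j *\<^sub>R rv v j) = 0}"

definition Ccone :: "('n::finite \<Rightarrow> int^'d::finite) \<Rightarrow> 'n set \<Rightarrow> (real^'n) set" where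
  "Ccone v C = {x \<in> LR v. \<forall>j. j \<notin> C \<longrightarrow> 0 \<le> x $ j}"

definition CSigma :: "('n::finite \<Rightarrow> int^'d::finite) \<Rightarrow> ('n \<Rightarrow> real) \<Rightarrow> (real^'n) set" where
  "CSigma v w = {x. \<exists>f. (\<forall>C\<in>cells v w. f C \<in> Ccone v C) \<and> x = (\<Sum>C\<in>cells v w. f C)}"

definition dualcone :: "('n::finite \<Rightarrow> int^'d::finite) \<Rightarrow> ('n \<Rightarrow> real) \<Rightarrow> (real^'n) set" where
  "dualcone v w = {y. \<forall>x\<in>CSigma v w. 0 \<le> x \<bullet> y}"

definition Udom :: "('n::finite \<Rightarrow> int^'d::finite) \<Rightarrow> ('n \<Rightarrow> real) \<Rightarrow> real^'n \<Rightarrow> ('n \<Rightarrow> complex) set" where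
  "Udom v w c = {z. (\<forall>j. z j \<noteq> 0 \<and> - pi < Arg (z j) \<and> Arg (z j) < pi)
                   \<and> (\<exists>y\<in>dualcone v w. \<forall>j. - ln (cmod (z j)) = y $ j + c $ j)}"

definition zpow :: "complex \<Rightarrow> complex \<Rightarrow> complex" where
  "zpow z s = exp (s * (complex_of_real (ln (cmod z)) + \<i> * complex_of_real (Arg z)))"

definition taylor_coeff :: "complex \<Rightarrow> real \<Rightarrow> nat \<Rightarrow> complex" where
  "taylor_coeff z s0 m = (deriv ^^ m) (\<lambda>s. zpow z s * rGamma (s + 1)) (complex_of_real s0) / of_nat (fact m)"

text \<open>x^b * prod_j D_j^(m_j) is nonzero in C[K,Sigma] (then equal to x^(b + sum m_j v_j)).\<close>
definition mono_nonzero :: "('n::finite \<Rightarrow> int^'d::finite) \<Rightarrow> ('n \<Rightarrow> real) \<Rightarrow> int^'d \<Rightarrow> ('n \<Rightarrow> nat) \<Rightarrow> bool" where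
  "mono_nonzero v w b m \<longleftrightarrow> (\<forall>j. 0 < m j \<longrightarrow> isray v w j)
     \<and> (\<exists>C\<in>cells v w. poscomb v C (ivec b) \<and> (\<forall>j. 0 < m j \<longrightarrow> poscomb v C (rv v j)))"

text \<open>Coefficient of x^u in the l-th term  x^b prod_j z_j^(l_j+gamma_j+D_j)/Gamma(l_j+gamma_j+D_j+1).\<close>
definition coef :: "('n::finite \<Rightarrow> int^'d::finite) \<Rightarrow> ('n \<Rightarrow> real) \<Rightarrow> (int^'d \<Rightarrow> 'n \<Rightarrow> real)
                    \<Rightarrow> ('n \<Rightarrow> complex) \<Rightarrow> int^'d \<Rightarrow> ('n \<Rightarrow> int) \<Rightarrow> int^'d \<Rightarrow> complex" where
  "coef v w \<gamma> z b l u =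
     (\<Sum>m\<in>{m. mono_nonzero v w b m \<and> ivec u = ivec b + (\<Sum>j\<in>UNIV. real (m j) *\<^sub>R rv v j)}.
        \<Prod>j\<in>UNIV. taylor_coeff (z j) (real_of_int (l j) + \<gamma> b j) (m j))"

end

theory Submission
  imports Defs "HOL-Complex_Analysis.Cauchy_Integral_Formula"
begin

(* The series is treated one monomial x^b D^m at a time; coef is a finite sum of such terms.
   Cauchy's estimate on the unit circle around l_j + gamma_j bounds the j-th Taylor coefficient by
   |z_j|^(l_j + gamma_j) times C 2^|l_j| / l_j! (for l_j >= 0) or C 2^|l_j| (-l_j)! (for l_j < 0),
   with C depending on z_j and gamma_j only.
   On the lattice L the l_j sum to 0, because every v_j has height 1, so the factorials cancel up to
   2^(n |l|_1).
   If x^b D^m is nonzero it lives in one cone sigma; off sigma, m_j = 0 and gamma_j is an integer, so the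
   l-th term vanishes unless l_j + gamma_j >= 0 there, i.e. unless l + d lies in C_sigma for a fixed
   d in L (x) R. Regularity of the triangulation gives delta > 0 with <x, w> >= delta |x|_1 on every
   C_sigma. Hence c = t w with t delta = (n + 2) log 2 lies in the dual cone, and on U_Sigma the factor
   |z^l| is at most a constant times 2^(-(n+2) |l|_1). The terms are thus dominated by 2^(-|l|_1),
   which is summable over Z^n. *)

section \<open>Factorial weights\<close>

lemma fact_add_le_pow2_mult: "(fact (a + b) :: real) \<le> 2 ^ (a + b) * fact a * fact b"
proof -
  have "fact (a + b) = (fact a * fact b * ((a + b) choose a) :: nat)"
    using binomial_fact_lemma[of a "a + b"] by simp
  also have "\<dots> \<le> fact a * fact b * 2 ^ (a + b)"
    by (intro mult_le_mono2 binomial_le_pow2)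
  finally have "real (fact (a + b)) \<le> real (fact a * fact b * 2 ^ (a + b))"
    by linarith
  then show ?thesis by (simp add: algebra_simps)
qed

lemma fact_mult_fact_le: "(fact a * fact b :: real) \<le> fact (a + b)"
proof -
  have "fact a * fact b \<le> (fact (a + b) :: nat)"
    by (intro dvd_imp_le fact_fact_dvd_fact) simp
  then show ?thesis by (metis of_nat_fact of_nat_le_iff of_nat_mult)
qed

lemma fact_sum_le_pow2_prod_fact:
  assumes "finite I"
  shows "(fact (\<Sum>i\<in>I. p i) :: real) \<le> 2 ^ (card I * (\<Sum>i\<in>I. p i)) * (\<Prod>i\<in>I. fact (p i))"
  using assms
proof (induction I rule: finite_induct)
  case (insert x F)
  let ?s = "\<Sum>i\<in>F. p i"
  have "(fact (\<Sum>i\<in>insert x F. p i) :: real) \<le> 2 ^ (p x + ?s) * fact (p x) * fact ?s"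
    using insert fact_add_le_pow2_mult by simp
  also have "\<dots> \<le> 2 ^ (p x + ?s) * fact (p x) * (2 ^ (card F * ?s) * (\<Prod>i\<in>F. fact (p i)))"
    by (intro mult_left_mono insert.IH) auto
  also have "\<dots> = 2 ^ (p x + ?s + card F * ?s) * (\<Prod>i\<in>insert x F. fact (p i))"
    using insert by (simp add: power_add algebra_simps)
  also have "\<dots> \<le> 2 ^ (card (insert x F) * (\<Sum>i\<in>insert x F. p i)) * (\<Prod>i\<in>insert x F. fact (p i))"
    using insert by (intro mult_right_mono power_increasing) (auto simp: algebra_simps prod_nonneg)
  finally show ?case .
qed simp

lemma prod_fact_le_fact_sum:
  assumes "finite I"
  shows "(\<Prod>i\<in>I. fact (p i)) \<le> (fact (\<Sum>i\<in>I. p i) :: real)"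
  using assms
proof (induction I rule: finite_induct)
  case (insert x F)
  then have "(\<Prod>i\<in>insert x F. fact (p i)) \<le> (fact (p x) :: real) * fact (\<Sum>i\<in>F. p i)"
    by (simp add: mult_left_mono)
  also have "\<dots> \<le> fact (\<Sum>i\<in>insert x F. p i)"
    using insert fact_mult_fact_le by simp
  finally show ?case .
qed simp

text \<open>\<open>rGamma_growth l\<close> is \<open>1 / l!\<close> for \<open>l \<ge> 0\<close> and \<open>(-l)!\<close> for \<open>l < 0\<close>: \<open>nat\<close> truncates the
  other factorial to \<open>0! = 1\<close>.\<close>
definition rGamma_growth :: "int \<Rightarrow> real" where
  "rGamma_growth l = fact (nat (- l)) / fact (nat l)"

lemma rGamma_growth_nonneg: "0 \<le> rGamma_growth l"
  by (simp add: rGamma_growth_def)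

lemma prod_rGamma_growth_le:
  assumes "finite I" and "(\<Sum>i\<in>I. l i) = (0::int)"
  shows "(\<Prod>i\<in>I. rGamma_growth (l i)) \<le> 2 ^ (card I * (\<Sum>i\<in>I. nat \<bar>l i\<bar>))"
proof -
  define p where "p i = nat (l i)" for i
  define q where "q i = nat (- l i)" for i
  have "(\<Sum>i\<in>I. int (p i)) - (\<Sum>i\<in>I. int (q i)) = (\<Sum>i\<in>I. l i)"
    unfolding sum_subtractf[symmetric] by (rule sum.cong) (auto simp: p_def q_def)
  then have balance: "(\<Sum>i\<in>I. p i) = (\<Sum>i\<in>I. q i)"
    using assms(2) by (simp flip: of_nat_sum)
  have "(\<Prod>i\<in>I. rGamma_growth (l i)) = (\<Prod>i\<in>I. fact (q i)) / (\<Prod>i\<in>I. fact (p i))"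
    by (simp add: rGamma_growth_def p_def q_def prod_dividef)
  also have "\<dots> \<le> fact (\<Sum>i\<in>I. p i) / (\<Prod>i\<in>I. fact (p i))"
    unfolding balance by (intro divide_right_mono prod_fact_le_fact_sum assms) (auto intro: prod_nonneg)
  also have "\<dots> \<le> 2 ^ (card I * (\<Sum>i\<in>I. p i))"
    using fact_sum_le_pow2_prod_fact[OF assms(1), of p] by (simp add: divide_le_eq prod_pos)
  also have "\<dots> \<le> 2 ^ (card I * (\<Sum>i\<in>I. nat \<bar>l i\<bar>))"
    by (intro power_increasing mult_le_mono2 sum_mono) (auto simp: p_def)
  finally show ?thesis .
qed

section \<open>Growth of the reciprocal Gamma function\<close>

lemma norm_rGamma_le_pos_shift:
  fixes g :: real and J k :: nat
  assumes J: "2 * \<bar>g\<bar> + 2 \<le> real J"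
    and M: "\<And>s. cmod s \<le> \<bar>g\<bar> + real J + 2 \<Longrightarrow> cmod (rGamma (s + 1)) \<le> M"
    and s: "cmod (s - of_real (real k + g)) \<le> 1"
  shows "cmod (rGamma (s + 1)) \<le> M * fact J * 2 ^ k / fact k"
proof -
  have M0: "0 \<le> M"
    using M[of 0] J by (auto intro: order_trans[OF norm_ge_zero])
  have near: "cmod (rGamma (s' + 1)) \<le> M * fact J * 2 ^ i / fact i"
    if s': "cmod (s' - of_real (real i + g)) \<le> 1" and "i \<le> J" for s' i
  proof -
    have "cmod s' \<le> cmod (of_real (real i + g) :: complex) + 1"
      using norm_triangle_sub[of s' "of_real (real i + g)"] s' by linarith
    then have "cmod s' \<le> \<bar>g\<bar> + real J + 2"
      unfolding norm_of_real using \<open>i \<le> J\<close> by linarith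
    then have "cmod (rGamma (s' + 1)) \<le> M * 1" using M by simp
    also have "\<dots> \<le> M * (fact J * 2 ^ i / fact i)"
    proof -
      have "(fact i :: real) \<le> fact J * 1"
        using fact_mono[OF \<open>i \<le> J\<close>] by simp
      also have "\<dots> \<le> fact J * 2 ^ i"
        by (intro mult_left_mono one_le_power) auto
      finally show ?thesis
        using M0 by (intro mult_left_mono) (auto simp: divide_simps)
    qed
    finally show ?thesis by simp
  qed
  show ?thesis
    using s
  proof (induction k arbitrary: s)
    case 0
    then show ?case by (intro near) auto
  next
    case (Suc k)
    show ?case
    proof (cases "Suc k \<le> J")
      case True
      with Suc.prems show ?thesis by (rule near)
    next
      case False
      have "cmod ((s - 1) - of_real (real k + g)) \<le> 1"
        using Suc.prems by (simp add: algebra_simps)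
      then have IH: "cmod (rGamma s) \<le> M * fact J * 2 ^ k / fact k"
        using Suc.IH[of "s - 1"] by simp
      have "real (Suc k) + g - 1 \<le> Re s"
        using Suc.prems abs_Re_le_cmod[of "s - of_real (real (Suc k) + g)"] by auto
      then have s_large: "(real k + 1) / 2 \<le> cmod s"
        using False J complex_Re_le_cmod[of s] by auto
      then have "s \<noteq> 0" by auto
      then have "cmod (rGamma (s + 1)) = cmod (rGamma s) / cmod s"
        by (metis rGamma_plus1 nonzero_eq_divide_eq norm_divide mult.commute)
      also have "\<dots> \<le> (M * fact J * 2 ^ k / fact k) / ((real k + 1) / 2)"
        by (rule frac_le) (use IH M0 s_large in auto)
      also have "\<dots> = M * fact J * 2 ^ Suc k / fact (Suc k)"
        by (simp add: field_simps)
      finally show ?thesis .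
    qed
  qed
qed

lemma norm_rGamma_le_neg_shift:
  fixes g :: real and J k :: nat
  assumes J: "2 * \<bar>g\<bar> + 2 \<le> real J"
    and M: "\<And>s. cmod s \<le> \<bar>g\<bar> + real J + 2 \<Longrightarrow> cmod (rGamma (s + 1)) \<le> M"
    and s: "cmod (s - of_real (g - real k)) \<le> 1"
  shows "cmod (rGamma (s + 1)) \<le> M * fact J * 2 ^ k * fact k"
proof -
  have M0: "0 \<le> M"
    using M[of 0] J by (auto intro: order_trans[OF norm_ge_zero])
  have near: "cmod (rGamma (s' + 1)) \<le> M * fact J * 2 ^ i * fact i"
    if s': "cmod (s' - of_real (g - real i)) \<le> 1" and "i \<le> J" for s' i
  proof -
    have "cmod s' \<le> cmod (of_real (g - real i) :: complex) + 1"
      using norm_triangle_sub[of s' "of_real (g - real i)"] s' by linarith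
    then have "cmod s' \<le> \<bar>g\<bar> + real J + 2"
      unfolding norm_of_real using \<open>i \<le> J\<close> by linarith
    then have "cmod (rGamma (s' + 1)) \<le> M * 1" using M by simp
    also have "\<dots> \<le> M * (fact J * 2 ^ i * fact i)"
      using M0 by (intro mult_left_mono mult_ge1_I one_le_power fact_ge_1) auto
    finally show ?thesis by (simp add: mult.assoc)
  qed
  show ?thesis
    using s
  proof (induction k arbitrary: s)
    case 0
    then show ?case by (intro near) auto
  next
    case (Suc k)
    show ?case
    proof (cases "Suc k \<le> J")
      case True
      with Suc.prems show ?thesis by (rule near)
    next
      case False
      have s1: "cmod ((s + 1) - of_real (g - real k)) \<le> 1"
        using Suc.prems by (simp add: algebra_simps)
      then have IH: "cmod (rGamma (s + 1 + 1)) \<le> M * fact J * 2 ^ k * fact k"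
        by (rule Suc.IH)
      have "cmod (s + 1) \<le> cmod (of_real (g - real k) :: complex) + 1"
        using norm_triangle_sub[of "s + 1" "of_real (g - real k)"] s1 by linarith
      then have "cmod (s + 1) \<le> 1 + (\<bar>g\<bar> + real k)"
        unfolding norm_of_real by linarith
      then have "cmod (s + 1) \<le> 2 * (real k + 1)"
        using False J by auto
      moreover have "cmod (rGamma (s + 1)) = cmod (s + 1) * cmod (rGamma (s + 1 + 1))"
        by (metis rGamma_plus1 norm_mult)
      ultimately have "cmod (rGamma (s + 1)) \<le> (2 * (real k + 1)) * (M * fact J * 2 ^ k * fact k)"
        using IH by (auto intro: mult_mono)
      also have "\<dots> = M * fact J * 2 ^ Suc k * fact (Suc k)"
        by (simp add: field_simps)
      finally show ?thesis .
    qed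
  qed
qed

lemma norm_rGamma_growth:
  fixes g :: real
  obtains A where "0 \<le> A"
    and "\<And>l s. cmod (s - of_real (of_int l + g)) \<le> 1 \<Longrightarrow>
           cmod (rGamma (s + 1)) \<le> A * 2 ^ nat \<bar>l\<bar> * rGamma_growth l"
proof -
  define J where "J = nat \<lceil>2 * \<bar>g\<bar> + 2\<rceil>"
  have J: "2 * \<bar>g\<bar> + 2 \<le> real J"
    unfolding J_def by linarith
  have "compact ((\<lambda>s. rGamma (s + 1)) ` cball (0::complex) (\<bar>g\<bar> + real J + 2))"
    by (intro compact_continuous_image continuous_on_compose2[OF continuous_on_rGamma[of UNIV]]
        continuous_intros compact_cball) auto
  then obtain M where M: "\<And>s. cmod s \<le> \<bar>g\<bar> + real J + 2 \<Longrightarrow> cmod (rGamma (s + 1)) \<le> M"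
    by (fastforce dest!: compact_imp_bounded simp: bounded_iff)
  have M0: "0 \<le> M"
    using M[of 0] J by (auto intro: order_trans[OF norm_ge_zero])
  show ?thesis
  proof (rule that[of "M * fact J"])
    show "0 \<le> M * fact J"
      using M0 by simp
    fix l :: int and s
    assume s: "cmod (s - of_real (of_int l + g)) \<le> 1"
    show "cmod (rGamma (s + 1)) \<le> M * fact J * 2 ^ nat \<bar>l\<bar> * rGamma_growth l"
    proof (cases "0 \<le> l")
      case True
      with s have "cmod (s - of_real (real (nat l) + g)) \<le> 1" by simp
      from norm_rGamma_le_pos_shift[OF J M this] True show ?thesis
        by (simp add: rGamma_growth_def)
    next
      case False
      with s have "cmod (s - of_real (g - real (nat (- l)))) \<le> 1" by (simp add: add.commute)
      from norm_rGamma_le_neg_shift[OF J M this] False show ?thesis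
        by (simp add: rGamma_growth_def)
    qed
  qed
qed

section \<open>Cauchy estimates for the Taylor coefficients\<close>

lemma norm_zpow_le:
  assumes "cmod (s - of_real s0) \<le> 1"
  shows "cmod (zpow z s) \<le> exp (s0 * ln (cmod z) + \<bar>ln (cmod z)\<bar> + pi)"
proof -
  define L where "L = ln (cmod z)"
  have re: "\<bar>Re s - s0\<bar> \<le> 1" and im: "\<bar>Im s\<bar> \<le> 1"
    using abs_Re_le_cmod[of "s - of_real s0"] abs_Im_le_cmod[of "s - of_real s0"] assms by auto
  have "\<bar>Re s - s0\<bar> * \<bar>L\<bar> \<le> 1 * \<bar>L\<bar>"
    using re by (intro mult_right_mono) auto
  then have "(Re s - s0) * L \<le> \<bar>L\<bar>"
    by (simp add: abs_le_iff flip: abs_mult)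
  moreover have "\<bar>Im s\<bar> * \<bar>Arg z\<bar> \<le> 1 * pi"
    using Arg_bounded[of z] by (intro mult_mono im) auto
  then have "- (Im s * Arg z) \<le> pi"
    by (simp add: abs_mult abs_le_iff flip: abs_mult)
  ultimately have "Re s * L - Im s * Arg z \<le> s0 * L + \<bar>L\<bar> + pi"
    by (simp add: algebra_simps)
  then show ?thesis
    by (simp add: zpow_def L_def)
qed

lemma norm_taylor_coeff_le:
  assumes "\<And>s::complex. cmod (s - of_real s0) = 1 \<Longrightarrow> cmod (rGamma (s + 1)) \<le> B"
  shows "cmod (taylor_coeff z s0 m) \<le> exp (s0 * ln (cmod z) + \<bar>ln (cmod z)\<bar> + pi) * B"
proof -
  define E where "E = exp (s0 * ln (cmod z) + \<bar>ln (cmod z)\<bar> + pi)"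
  define f where "f s = zpow z s * rGamma (s + 1)" for s
  have hol: "f holomorphic_on A" for A
    unfolding f_def zpow_def by (intro holomorphic_intros)
  have "norm ((deriv ^^ m) f (complex_of_real s0)) \<le> fact m * (E * B) / 1 ^ m"
  proof (rule Cauchy_inequality)
    fix s assume "norm (complex_of_real s0 - s) = 1"
    then have s: "cmod (s - of_real s0) = 1"
      by (simp add: norm_minus_commute)
    then show "norm (f s) \<le> E * B"
      unfolding f_def E_def norm_mult using norm_zpow_le[of s s0 z] assms
      by (intro mult_mono) auto
  qed (auto intro: hol holomorphic_on_imp_continuous_on)
  then show ?thesis
    unfolding taylor_coeff_def f_def[symmetric] E_def[symmetric]
    by (simp add: norm_divide divide_le_eq mult.commute)
qed

lemma taylor_coeff_0_eq_0:
  assumes "s0 \<in> \<int>" and "s0 < 0"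
  shows "taylor_coeff z s0 0 = 0"
proof -
  obtain k where k: "s0 = of_int k"
    using assms(1) by (auto elim: Ints_cases)
  have "complex_of_real s0 + 1 = of_int (k + 1)"
    using k by simp
  also have "\<dots> \<in> \<int>\<^sub>\<le>\<^sub>0"
    using assms(2) k by (intro nonpos_Ints_of_int) simp
  finally show ?thesis
    by (simp add: taylor_coeff_def rGamma_nonpos_Int)
qed

lemma norm_taylor_coeff_growth:
  fixes g :: real
  obtains A where "0 \<le> A"
    and "\<And>l z m. cmod (taylor_coeff z (of_int l + g) m)
           \<le> exp ((of_int l + g) * ln (cmod z) + \<bar>ln (cmod z)\<bar> + pi) * (A * 2 ^ nat \<bar>l\<bar> * rGamma_growth l)"
proof -
  obtain A where "0 \<le> A" and A: "\<And>l s. cmod (s - of_real (of_int l + g)) \<le> 1 \<Longrightarrow>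
      cmod (rGamma (s + 1)) \<le> A * 2 ^ nat \<bar>l\<bar> * rGamma_growth l"
    using norm_rGamma_growth by blast
  show ?thesis
    using that[OF \<open>0 \<le> A\<close>] norm_taylor_coeff_le A by force
qed

lemma norm_prod_taylor_coeff_le:
  fixes z :: "'n::finite \<Rightarrow> complex" and g :: "'n \<Rightarrow> real" and m :: "'n \<Rightarrow> nat"
  obtains K where "0 \<le> K"
    and "\<And>l. norm (\<Prod>j\<in>UNIV. taylor_coeff (z j) (of_int (l j) + g j) (m j))
           \<le> K * exp (\<Sum>j\<in>UNIV. of_int (l j) * ln (cmod (z j))) * 2 ^ (\<Sum>j\<in>UNIV. nat \<bar>l j\<bar>)
               * (\<Prod>j\<in>UNIV. rGamma_growth (l j))"
proof -
  have "\<forall>j. \<exists>A\<ge>0. \<forall>l z m. cmod (taylor_coeff z (of_int l + g j) m)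
      \<le> exp ((of_int l + g j) * ln (cmod z) + \<bar>ln (cmod z)\<bar> + pi) * (A * 2 ^ nat \<bar>l\<bar> * rGamma_growth l)"
    by (metis norm_taylor_coeff_growth)
  then obtain A where A0: "\<And>j. 0 \<le> A j" and A: "\<And>j l z m. cmod (taylor_coeff z (of_int l + g j) m)
      \<le> exp ((of_int l + g j) * ln (cmod z) + \<bar>ln (cmod z)\<bar> + pi) * (A j * 2 ^ nat \<bar>l\<bar> * rGamma_growth l)"
    by metis
  define L where "L j = ln (cmod (z j))" for j
  define K where "K = (\<Prod>j\<in>UNIV. exp (g j * L j + \<bar>L j\<bar> + pi) * A j)"
  show ?thesis
  proof (rule that)
    show "0 \<le> K"
      unfolding K_def using A0 by (intro prod_nonneg) auto
    fix l :: "'n \<Rightarrow> int"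
    have "norm (\<Prod>j\<in>UNIV. taylor_coeff (z j) (of_int (l j) + g j) (m j))
        \<le> (\<Prod>j\<in>UNIV. exp ((of_int (l j) + g j) * L j + \<bar>L j\<bar> + pi) * (A j * 2 ^ nat \<bar>l j\<bar> * rGamma_growth (l j)))"
      unfolding prod_norm[symmetric] L_def by (intro prod_mono conjI A) auto
    also have "\<dots> = (\<Prod>j\<in>UNIV. (exp (g j * L j + \<bar>L j\<bar> + pi) * A j) * exp (of_int (l j) * L j)
                        * 2 ^ nat \<bar>l j\<bar> * rGamma_growth (l j))"
      by (intro prod.cong) (auto simp: algebra_simps simp flip: exp_add)
    also have "\<dots> = K * exp (\<Sum>j\<in>UNIV. of_int (l j) * L j) * 2 ^ (\<Sum>j\<in>UNIV. nat \<bar>l j\<bar>)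
                      * (\<Prod>j\<in>UNIV. rGamma_growth (l j))"
      unfolding K_def by (simp add: prod.distrib exp_sum power_sum)
    finally show "norm (\<Prod>j\<in>UNIV. taylor_coeff (z j) (of_int (l j) + g j) (m j))
           \<le> K * exp (\<Sum>j\<in>UNIV. of_int (l j) * ln (cmod (z j))) * 2 ^ (\<Sum>j\<in>UNIV. nat \<bar>l j\<bar>)
               * (\<Prod>j\<in>UNIV. rGamma_growth (l j))"
      by (simp add: L_def)
  qed
qed

section \<open>Geometric decay\<close>

lemma sum_pow_half_abs: "(\<Sum>k\<in>{-int N..int N}. (1/2::real) ^ nat \<bar>k\<bar>) = 3 - 2 * (1/2) ^ N"
proof (induction N)
  case (Suc N)
  have "{-int (Suc N)..int (Suc N)} = insert (int N + 1) (insert (- (int N + 1)) {-int N..int N})"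
    by auto
  then have "(\<Sum>k\<in>{-int (Suc N)..int (Suc N)}. (1/2::real) ^ nat \<bar>k\<bar>)
      = 2 * (1/2) ^ Suc N + (\<Sum>k\<in>{-int N..int N}. (1/2::real) ^ nat \<bar>k\<bar>)"
    by (simp add: nat_add_distrib)
  then show ?case
    using Suc.IH by simp
qed simp

lemma summable_on_pow_half_sum_abs:
  "(\<lambda>l::'n::finite \<Rightarrow> int. (1/2::real) ^ (\<Sum>j\<in>UNIV. nat \<bar>l j\<bar>)) summable_on UNIV"
proof (rule nonneg_bdd_above_summable_on)
  show "bdd_above (sum (\<lambda>l::'n \<Rightarrow> int. (1/2::real) ^ (\<Sum>j\<in>UNIV. nat \<bar>l j\<bar>)) ` {F. F \<subseteq> UNIV \<and> finite F})"
  proof (rule bdd_aboveI2)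
    fix F :: "('n \<Rightarrow> int) set"
    assume "F \<in> {F. F \<subseteq> UNIV \<and> finite F}"
    then have "finite F" by simp
    define N where "N = Max (insert 0 ((\<lambda>(l, j). nat \<bar>l j\<bar>) ` (F \<times> UNIV)))"
    have "nat \<bar>l j\<bar> \<le> N" if "l \<in> F" for l j
      unfolding N_def using \<open>finite F\<close> that by (intro Max_ge) auto
    then have "l j \<in> {-int N..int N}" if "l \<in> F" for l j
      using that nat_le_iff[of "\<bar>l j\<bar>" N] by (auto simp: abs_le_iff)
    then have F_box: "F \<subseteq> PiE UNIV (\<lambda>_. {-int N..int N})"
      by auto
    have "(\<Sum>l\<in>F. (1/2::real) ^ (\<Sum>j\<in>UNIV. nat \<bar>l j\<bar>))
        \<le> (\<Sum>l\<in>PiE (UNIV::'n set) (\<lambda>_. {-int N..int N}). \<Prod>j\<in>UNIV. (1/2::real) ^ nat \<bar>l j\<bar>)"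
      unfolding power_sum using F_box by (intro sum_mono2) (auto intro: prod_nonneg finite_PiE)
    also have "\<dots> = (\<Prod>j\<in>(UNIV::'n set). \<Sum>k\<in>{-int N..int N}. (1/2::real) ^ nat \<bar>k\<bar>)"
      by (rule prod_sum_PiE[symmetric]) auto
    also have "\<dots> \<le> (\<Prod>j\<in>(UNIV::'n set). 3)"
      using power_le_one[of "1/2::real" N] by (intro prod_mono) (auto simp: sum_pow_half_abs)
    finally show "(\<Sum>l\<in>F. (1/2::real) ^ (\<Sum>j\<in>UNIV. nat \<bar>l j\<bar>)) \<le> 3 ^ CARD('n)"
      by simp
  qed
qed auto

lemma summable_on_if_norm_le_pow_half:
  fixes f :: "('n::finite \<Rightarrow> int) \<Rightarrow> complex"
  assumes "\<And>l. l \<in> A \<Longrightarrow> norm (f l) \<le> B * (1/2) ^ (\<Sum>j\<in>UNIV. nat \<bar>l j\<bar>)"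
  shows "f summable_on A"
proof -
  have "(\<lambda>l. B * (1/2) ^ (\<Sum>j\<in>UNIV. nat \<bar>l j\<bar>)) summable_on A"
    by (intro summable_on_cmult_right summable_on_subset_banach[OF summable_on_pow_half_sum_abs]) simp
  then have "(\<lambda>l. norm (f l)) summable_on A"
    by (rule summable_on_comparison_test) (use assms in auto)
  then show ?thesis
    by (simp add: summable_on_iff_abs_summable_on_complex)
qed

lemma pow_half_absorbs_growth:
  fixes n S :: nat
  assumes "E \<le> D - real ((n + 2) * S) * ln 2" and "0 \<le> K" and "0 \<le> P" and "P \<le> 2 ^ (n * S)"
  shows "K * exp E * 2 ^ S * P \<le> K * exp D * (1/2) ^ S"
proof -
  have "exp E \<le> exp (D - real ((n + 2) * S) * ln 2)"
    using assms(1) by simp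
  also have "\<dots> = exp D / exp (ln 2) ^ ((n + 2) * S)"
    by (simp only: exp_diff exp_of_nat_mult)
  also have "\<dots> = exp D * (1/2) ^ ((n + 2) * S)"
    by (simp add: power_one_over)
  finally have "K * exp E * 2 ^ S * P \<le> K * (exp D * (1/2) ^ ((n + 2) * S)) * 2 ^ S * 2 ^ (n * S)"
    using assms(2-4) by (intro mult_mono mult_left_mono) auto
  also have "\<dots> = K * exp D * (2 ^ S * 2 ^ (n * S) / 2 ^ ((n + 2) * S))"
    by (simp add: power_one_over)
  also have "(2::real) ^ ((n + 2) * S) = 2 ^ S * 2 ^ (n * S) * 2 ^ S"
    by (simp flip: power_add add: algebra_simps)
  then have "2 ^ S * 2 ^ (n * S) / 2 ^ ((n + 2) * S) = (1/2::real) ^ S"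
    by (simp add: power_one_over)
  finally show ?thesis .
qed

lemma summable_on_sum:
  fixes f :: "'i \<Rightarrow> 'a \<Rightarrow> complex"
  assumes "finite I" and "\<And>i. i \<in> I \<Longrightarrow> f i summable_on A"
  shows "(\<lambda>x. \<Sum>i\<in>I. f i x) summable_on A"
  using assms by (induction I rule: finite_induct) (auto intro: summable_on_add)

section \<open>The cones attached to the fan\<close>

lemma sum_UNIV_split_Compl:
  fixes f :: "'n::finite \<Rightarrow> 'a::comm_monoid_add"
  shows "(\<Sum>j\<in>UNIV. f j) = (\<Sum>j\<in>C. f j) + (\<Sum>j\<in>-C. f j)"
  by (metis Compl_partition Compl_disjoint finite sum.union_disjoint)

lemma independent_coeffs_le_norm:
  fixes u :: "'n::finite \<Rightarrow> 'a::euclidean_space"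
  assumes inj: "inj_on u C" and ind: "independent (u ` C)"
  obtains K where "0 \<le> K" and "\<And>a::real^'n. (\<Sum>j\<in>C. \<bar>a$j\<bar>) \<le> K * norm (\<Sum>j\<in>C. a$j *\<^sub>R u j)"
proof -
  define S where "S = {a::real^'n. \<forall>j\<in>-C. a$j = 0}"
  define f where "f a = (\<Sum>j\<in>C. a$j *\<^sub>R u j)" for a :: "real^'n"
  have "subspace S"
    unfolding subspace_def S_def by auto
  moreover have "bounded_linear f"
    unfolding linear_conv_bounded_linear[symmetric]
    by (rule linearI) (simp_all add: f_def scaleR_add_left sum.distrib scaleR_sum_right)
  moreover have "\<forall>a\<in>S. f a = 0 \<longrightarrow> a = 0"
  proof (intro ballI impI)
    fix a assume "a \<in> S" and "f a = 0"
    have "(\<Sum>x\<in>u ` C. a $ inv_into C u x *\<^sub>R x) = f a"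
      unfolding f_def using inj by (simp add: sum.reindex)
    then have "\<forall>x\<in>u ` C. a $ inv_into C u x = 0"
      using ind \<open>f a = 0\<close> unfolding independent_explicit
      by (auto dest: spec[of _ "\<lambda>x. a $ inv_into C u x"])
    then show "a = 0"
      using \<open>a \<in> S\<close> inj by (auto simp: S_def vec_eq_iff)
  qed
  ultimately obtain \<epsilon> where "0 < \<epsilon>" and \<epsilon>: "\<And>a. a \<in> S \<Longrightarrow> \<epsilon> * norm a \<le> norm (f a)"
    using injective_imp_isometric[OF closed_subspace] by metis
  show ?thesis
  proof (rule that[of "real CARD('n) / \<epsilon>"])
    show "0 \<le> real CARD('n) / \<epsilon>"
      using \<open>0 < \<epsilon>\<close> by simp
    fix a :: "real^'n"
    define a' where "a' = (\<chi> j. if j \<in> C then a$j else 0)"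
    have "a' \<in> S" and "f a' = f a"
      by (auto simp: S_def a'_def f_def)
    have "(\<Sum>j\<in>C. \<bar>a$j\<bar>) = (\<Sum>j\<in>C. \<bar>a'$j\<bar>)"
      by (simp add: a'_def)
    also have "\<dots> \<le> (\<Sum>j\<in>C. norm a')"
      by (intro sum_mono component_le_norm_cart)
    also have "\<dots> \<le> (\<Sum>j\<in>(UNIV::'n set). norm a')"
      by (intro sum_mono2) auto
    also have "\<dots> = real CARD('n) / \<epsilon> * (\<epsilon> * norm a')"
      using \<open>0 < \<epsilon>\<close> by simp
    also have "\<dots> \<le> real CARD('n) / \<epsilon> * norm (\<Sum>j\<in>C. a$j *\<^sub>R u j)"
      using \<epsilon>[OF \<open>a' \<in> S\<close>] \<open>0 < \<epsilon>\<close> \<open>f a' = f a\<close> by (intro mult_left_mono) (auto simp: f_def)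
    finally show "(\<Sum>j\<in>C. \<bar>a$j\<bar>) \<le> real CARD('n) / \<epsilon> * norm (\<Sum>j\<in>C. a$j *\<^sub>R u j)" .
  qed
qed

lemma finite_cells: "finite (cells v w)"
  by (rule finite_subset[of _ UNIV]) auto

lemma cellE:
  assumes "C \<in> cells v w"
  obtains \<psi> where "\<And>j. \<psi> \<bullet> rv v j \<le> w j" and "C = {j. \<psi> \<bullet> rv v j = w j}"
    and "span (rv v ` C) = UNIV"
  using assms unfolding cells_def by blast

lemma cell_contains_support:
  assumes C: "C \<in> cells v w" and C': "C' \<in> cells v w"
    and a: "\<forall>j\<in>C. 0 \<le> a j" and q: "\<forall>j. 0 \<le> q j" and q_C': "\<forall>j. j \<notin> C' \<longrightarrow> q j = 0"
    and eq: "(\<Sum>j\<in>C. a j *\<^sub>R rv v j) = (\<Sum>j\<in>UNIV. q j *\<^sub>R rv v j)" and "q j \<noteq> 0"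
  shows "j \<in> C"
proof -
  obtain \<psi> where \<psi>: "\<And>j. \<psi> \<bullet> rv v j \<le> w j" and C_eq: "C = {j. \<psi> \<bullet> rv v j = w j}"
    using C by (blast elim: cellE)
  obtain \<psi>' where \<psi>': "\<And>j. \<psi>' \<bullet> rv v j \<le> w j" and C'_eq: "C' = {j. \<psi>' \<bullet> rv v j = w j}"
    using C' by (blast elim: cellE)
  define p where "p = (\<Sum>j\<in>C. a j *\<^sub>R rv v j)"
  have "(\<Sum>i\<in>UNIV. q i * w i) = (\<Sum>i\<in>UNIV. q i * (\<psi>' \<bullet> rv v i))"
    using q_C' C'_eq by (intro sum.cong) auto
  also have "\<dots> = \<psi>' \<bullet> p"
    by (simp add: p_def eq inner_sum_right)
  also have "\<dots> = (\<Sum>i\<in>C. a i * (\<psi>' \<bullet> rv v i))"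
    by (simp add: p_def inner_sum_right)
  also have "\<dots> \<le> (\<Sum>i\<in>C. a i * (\<psi> \<bullet> rv v i))"
    using a \<psi>' C_eq by (intro sum_mono mult_left_mono) auto
  also have "\<dots> = \<psi> \<bullet> p"
    by (simp add: p_def inner_sum_right)
  also have "\<dots> = (\<Sum>i\<in>UNIV. q i * (\<psi> \<bullet> rv v i))"
    by (simp add: p_def eq inner_sum_right)
  \<comment> \<open>The height of \<open>p\<close> computed through \<open>C'\<close> is at most the one computed through \<open>C\<close>; since
    \<open>w \<ge> \<psi>\<close> on all generators, \<open>q\<close> can only use generators where \<open>w = \<psi>\<close>, i.e. those of \<open>C\<close>.\<close>
  finally have "(\<Sum>i\<in>UNIV. q i * (w i - \<psi> \<bullet> rv v i)) \<le> 0"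
    by (simp add: algebra_simps sum_subtractf)
  moreover have nonneg: "\<forall>i\<in>UNIV. 0 \<le> q i * (w i - \<psi> \<bullet> rv v i)"
    using q \<psi> by simp
  moreover have "0 \<le> (\<Sum>i\<in>UNIV. q i * (w i - \<psi> \<bullet> rv v i))"
    using nonneg by (intro sum_nonneg) auto
  ultimately have "(\<Sum>i\<in>UNIV. q i * (w i - \<psi> \<bullet> rv v i)) = 0"
    by linarith
  then have "q j * (w j - \<psi> \<bullet> rv v j) = 0"
    using nonneg by (simp add: sum_nonneg_eq_0_iff)
  then show ?thesis
    using \<open>q j \<noteq> 0\<close> C_eq by simp
qed

lemma Ccone_sum_abs_le:
  fixes v :: "'n::finite \<Rightarrow> int^'d::finite"
  assumes "inj_on (rv v) C" and "independent (rv v ` C)"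
  obtains K where "0 \<le> K" and "\<And>x. x \<in> Ccone v C \<Longrightarrow> (\<Sum>j\<in>UNIV. \<bar>x$j\<bar>) \<le> K * (\<Sum>j\<in>-C. x$j)"
proof -
  obtain K0 where "0 \<le> K0" and K0: "\<And>a::real^'n. (\<Sum>j\<in>C. \<bar>a$j\<bar>) \<le> K0 * norm (\<Sum>j\<in>C. a$j *\<^sub>R rv v j)"
    using independent_coeffs_le_norm[OF assms] by blast
  define V where "V = (\<Sum>j\<in>UNIV. norm (rv v j))"
  have V: "norm (rv v j) \<le> V" for j
    unfolding V_def by (rule member_le_sum) auto
  have "0 \<le> V"
    unfolding V_def by (intro sum_nonneg) auto
  show ?thesis
  proof (rule that[of "K0 * V + 1"])
    show "0 \<le> K0 * V + 1"
      using \<open>0 \<le> K0\<close> \<open>0 \<le> V\<close> by simp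
    fix x assume "x \<in> Ccone v C"
    then have LR: "(\<Sum>j\<in>UNIV. x$j *\<^sub>R rv v j) = 0" and pos: "\<And>j. j \<in> -C \<Longrightarrow> 0 \<le> x$j"
      unfolding Ccone_def LR_def by auto
    have "(\<Sum>j\<in>C. x$j *\<^sub>R rv v j) = - (\<Sum>j\<in>-C. x$j *\<^sub>R rv v j)"
      using LR sum_UNIV_split_Compl[of "\<lambda>j. x$j *\<^sub>R rv v j" C] by (simp add: eq_neg_iff_add_eq_0)
    then have "(\<Sum>j\<in>C. \<bar>x$j\<bar>) \<le> K0 * norm (\<Sum>j\<in>-C. x$j *\<^sub>R rv v j)"
      using K0[of x] by simp
    also have "\<dots> \<le> K0 * (\<Sum>j\<in>-C. x$j * V)"
      using pos V \<open>0 \<le> K0\<close>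
      by (intro mult_left_mono order_trans[OF norm_sum sum_mono]) (auto intro: mult_left_mono)
    also have "\<dots> = K0 * V * (\<Sum>j\<in>-C. x$j)"
      by (simp add: sum_distrib_left algebra_simps)
    finally have "(\<Sum>j\<in>C. \<bar>x$j\<bar>) \<le> K0 * V * (\<Sum>j\<in>-C. x$j)" .
    moreover have "(\<Sum>j\<in>-C. \<bar>x$j\<bar>) = (\<Sum>j\<in>-C. x$j)"
      using pos by (intro sum.cong) auto
    ultimately show "(\<Sum>j\<in>UNIV. \<bar>x$j\<bar>) \<le> (K0 * V + 1) * (\<Sum>j\<in>-C. x$j)"
      using sum_UNIV_split_Compl[of "\<lambda>j. \<bar>x$j\<bar>" C] by (simp add: algebra_simps)
  qed
qed

lemma Ccone_coercive:
  fixes v :: "'n::finite \<Rightarrow> int^'d::finite"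
  assumes C: "C \<in> cells v w" and "inj_on (rv v) C" and "independent (rv v ` C)"
  shows "\<exists>\<delta>>0. \<forall>x\<in>Ccone v C. \<delta> * (\<Sum>j\<in>UNIV. \<bar>x$j\<bar>) \<le> (\<Sum>j\<in>UNIV. x$j * w j)"
proof -
  \<comment> \<open>Off \<open>C\<close> the heights exceed the supporting function \<open>\<psi>\<close> by at least \<open>\<delta>0 > 0\<close>, and on a
    relation \<open>x\<close> the coordinates off \<open>C\<close> control all others.\<close>
  obtain \<psi> where \<psi>: "\<And>j. \<psi> \<bullet> rv v j \<le> w j" and C_eq: "C = {j. \<psi> \<bullet> rv v j = w j}"
    using C by (blast elim: cellE)
  define e where "e j = w j - \<psi> \<bullet> rv v j" for j
  have e_pos: "0 < e j" if "j \<in> -C" for j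
    using \<psi>[of j] that C_eq by (auto simp: e_def)
  define \<delta>0 where "\<delta>0 = Min (insert 1 (e ` (-C)))"
  have "0 < \<delta>0"
    unfolding \<delta>0_def using e_pos by (subst Min_gr_iff) auto
  have \<delta>0_le: "\<delta>0 \<le> e j" if "j \<in> -C" for j
    unfolding \<delta>0_def using that by (intro Min_le) auto
  obtain K where "0 \<le> K" and K: "\<And>x. x \<in> Ccone v C \<Longrightarrow> (\<Sum>j\<in>UNIV. \<bar>x$j\<bar>) \<le> K * (\<Sum>j\<in>-C. x$j)"
    using Ccone_sum_abs_le assms(2,3) by blast
  show ?thesis
  proof (intro exI[of _ "\<delta>0 / (K + 1)"] conjI ballI)
    show "0 < \<delta>0 / (K + 1)"
      using \<open>0 < \<delta>0\<close> \<open>0 \<le> K\<close> by simp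
    fix x assume x: "x \<in> Ccone v C"
    then have LR: "(\<Sum>j\<in>UNIV. x$j *\<^sub>R rv v j) = 0" and pos: "\<And>j. j \<in> -C \<Longrightarrow> 0 \<le> x$j"
      unfolding Ccone_def LR_def by auto
    have "0 \<le> (\<Sum>j\<in>-C. x$j)"
      using pos by (rule sum_nonneg)
    then have "(\<Sum>j\<in>UNIV. \<bar>x$j\<bar>) \<le> (K + 1) * (\<Sum>j\<in>-C. x$j)"
      using K[OF x] by (simp add: distrib_right)
    then have "\<delta>0 / (K + 1) * (\<Sum>j\<in>UNIV. \<bar>x$j\<bar>) \<le> \<delta>0 / (K + 1) * ((K + 1) * (\<Sum>j\<in>-C. x$j))"
      using \<open>0 < \<delta>0\<close> \<open>0 \<le> K\<close> by (intro mult_left_mono) auto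
    also have "\<dots> = \<delta>0 * (\<Sum>j\<in>-C. x$j)"
      using \<open>0 \<le> K\<close> by simp
    also have "\<dots> \<le> (\<Sum>j\<in>-C. x$j * e j)"
      unfolding sum_distrib_left using pos \<delta>0_le by (intro sum_mono) (simp add: mult.commute mult_right_mono)
    also have "\<dots> = (\<Sum>j\<in>UNIV. x$j * e j)"
      using sum_UNIV_split_Compl[of "\<lambda>j. x$j * e j" C] C_eq by (simp add: e_def)
    also have "\<dots> = (\<Sum>j\<in>UNIV. x$j * w j) - \<psi> \<bullet> (\<Sum>j\<in>UNIV. x$j *\<^sub>R rv v j)"
      by (simp add: e_def algebra_simps sum_subtractf inner_sum_right)
    finally show "\<delta>0 / (K + 1) * (\<Sum>j\<in>UNIV. \<bar>x$j\<bar>) \<le> (\<Sum>j\<in>UNIV. x$j * w j)"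
      using LR by simp
  qed
qed

lemma cells_coercive:
  fixes v :: "'n::finite \<Rightarrow> int^'d::finite"
  assumes "regular_triangulation v w"
  obtains \<delta> where "0 < \<delta>"
    and "\<And>C x. C \<in> cells v w \<Longrightarrow> x \<in> Ccone v C \<Longrightarrow> \<delta> * (\<Sum>j\<in>UNIV. \<bar>x$j\<bar>) \<le> (\<Sum>j\<in>UNIV. x$j * w j)"
proof -
  have "\<forall>C\<in>cells v w. \<exists>\<delta>>0. \<forall>x\<in>Ccone v C. \<delta> * (\<Sum>j\<in>UNIV. \<bar>x$j\<bar>) \<le> (\<Sum>j\<in>UNIV. x$j * w j)"
    using assms Ccone_coercive unfolding regular_triangulation_def by blast
  then obtain D where D_pos: "\<And>C. C \<in> cells v w \<Longrightarrow> 0 < D C"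
    and D: "\<And>C x. C \<in> cells v w \<Longrightarrow> x \<in> Ccone v C \<Longrightarrow> D C * (\<Sum>j\<in>UNIV. \<bar>x$j\<bar>) \<le> (\<Sum>j\<in>UNIV. x$j * w j)"
    by (auto dest!: bchoice)
  define \<delta> where "\<delta> = Min (insert 1 (D ` cells v w))"
  have fin: "finite (insert 1 (D ` cells v w))"
    using finite_cells by blast
  show ?thesis
  proof (rule that)
    show "0 < \<delta>"
      unfolding \<delta>_def using fin D_pos by (subst Min_gr_iff) auto
    fix C x assume C: "C \<in> cells v w" and x: "x \<in> Ccone v C"
    have "\<delta> \<le> D C"
      unfolding \<delta>_def using fin C by (intro Min_le) auto
    then have "\<delta> * (\<Sum>j\<in>UNIV. \<bar>x$j\<bar>) \<le> D C * (\<Sum>j\<in>UNIV. \<bar>x$j\<bar>)"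
      by (intro mult_right_mono sum_nonneg) auto
    also have "\<dots> \<le> (\<Sum>j\<in>UNIV. x$j * w j)"
      using C x by (rule D)
    finally show "\<delta> * (\<Sum>j\<in>UNIV. \<bar>x$j\<bar>) \<le> (\<Sum>j\<in>UNIV. x$j * w j)" .
  qed
qed

lemma Ccone_subset_CSigma:
  assumes "C \<in> cells v w"
  shows "Ccone v C \<subseteq> CSigma v w"
proof
  fix x assume x: "x \<in> Ccone v C"
  define f where "f C' = (if C' = C then x else 0)" for C'
  have "\<forall>C'\<in>cells v w. f C' \<in> Ccone v C'"
    using x by (auto simp: f_def Ccone_def LR_def)
  moreover have "x = (\<Sum>C'\<in>cells v w. f C')"
    unfolding f_def using assms finite_cells by (simp add: sum.delta')
  ultimately show "x \<in> CSigma v w"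
    unfolding CSigma_def by blast
qed

lemma scaled_heights_in_dualcone:
  assumes "\<And>C x. C \<in> cells v w \<Longrightarrow> x \<in> Ccone v C \<Longrightarrow> 0 \<le> (\<Sum>j\<in>UNIV. x$j * w j)"
    and "0 \<le> t"
  shows "(\<chi> j. t * w j) \<in> dualcone v w"
  unfolding dualcone_def
proof (intro CollectI ballI)
  fix x assume "x \<in> CSigma v w"
  then obtain f where f: "\<forall>C\<in>cells v w. f C \<in> Ccone v C" and x: "x = (\<Sum>C\<in>cells v w. f C)"
    unfolding CSigma_def by blast
  have "0 \<le> t * (\<Sum>j\<in>UNIV. f C $ j * w j)" if "C \<in> cells v w" for C
    using assms f that by simp
  then show "0 \<le> x \<bullet> (\<chi> j. t * w j)"
    unfolding x inner_sum_left
    by (intro sum_nonneg) (simp add: inner_vec_def sum_distrib_left algebra_simps)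
qed

lemma coercive_scaled_heights_in_dualcone:
  fixes v :: "'n::finite \<Rightarrow> int^'d::finite"
  assumes "regular_triangulation v w"
  obtains \<delta> t where "0 < \<delta>" and "t * \<delta> = (real CARD('n) + 2) * ln 2"
    and "(\<chi> j. t * w j) \<in> dualcone v w"
    and "\<And>C x. C \<in> cells v w \<Longrightarrow> x \<in> Ccone v C \<Longrightarrow> \<delta> * (\<Sum>j\<in>UNIV. \<bar>x$j\<bar>) \<le> (\<Sum>j\<in>UNIV. x$j * w j)"
proof -
  obtain \<delta> where "0 < \<delta>" and coercive: "\<And>C x. C \<in> cells v w \<Longrightarrow> x \<in> Ccone v C \<Longrightarrow>
      \<delta> * (\<Sum>j\<in>UNIV. \<bar>x$j\<bar>) \<le> (\<Sum>j\<in>UNIV. x$j * w j)"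
    using cells_coercive[OF assms] by blast
  define t where "t = (real CARD('n) + 2) * ln 2 / \<delta>"
  have "t * \<delta> = (real CARD('n) + 2) * ln 2" and "0 \<le> t"
    using \<open>0 < \<delta>\<close> by (simp_all add: t_def)
  moreover have "0 \<le> (\<Sum>j\<in>UNIV. x$j * w j)" if "C \<in> cells v w" and "x \<in> Ccone v C" for C x
    using \<open>0 < \<delta>\<close> by (intro order_trans[OF _ coercive[OF that]] mult_nonneg_nonneg sum_nonneg) auto
  then have "(\<chi> j. t * w j) \<in> dualcone v w"
    using \<open>0 \<le> t\<close> by (rule scaled_heights_in_dualcone)
  ultimately show ?thesis
    using that \<open>0 < \<delta>\<close> coercive by blast
qed

lemma Ccone_shift_exponent_bound:
  fixes v :: "'n::finite \<Rightarrow> int^'d::finite"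
  assumes coercive: "\<And>x. x \<in> Ccone v C \<Longrightarrow> \<delta> * (\<Sum>j\<in>UNIV. \<bar>x$j\<bar>) \<le> (\<Sum>j\<in>UNIV. x$j * w j)"
    and C: "C \<in> cells v w" and y: "y \<in> dualcone v w" and "0 \<le> t" "0 \<le> \<delta>"
    and x: "x \<in> Ccone v C"
  shows "t * \<delta> * (\<Sum>j\<in>UNIV. \<bar>x$j - d$j\<bar>) - (d \<bullet> y + t * (\<delta> * (\<Sum>j\<in>UNIV. \<bar>d$j\<bar>) + (\<Sum>j\<in>UNIV. d$j * w j)))
    \<le> (\<Sum>j\<in>UNIV. (x$j - d$j) * (y$j + t * w j))"
proof -
  have "0 \<le> x \<bullet> y"
    using y Ccone_subset_CSigma[OF C] x unfolding dualcone_def by blast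
  have "(\<Sum>j\<in>UNIV. \<bar>x$j - d$j\<bar>) \<le> (\<Sum>j\<in>UNIV. \<bar>x$j\<bar>) + (\<Sum>j\<in>UNIV. \<bar>d$j\<bar>)"
    unfolding sum.distrib[symmetric] by (intro sum_mono abs_triangle_ineq4)
  then have "t * \<delta> * ((\<Sum>j\<in>UNIV. \<bar>x$j - d$j\<bar>) - (\<Sum>j\<in>UNIV. \<bar>d$j\<bar>)) \<le> t * (\<delta> * (\<Sum>j\<in>UNIV. \<bar>x$j\<bar>))"
    using \<open>0 \<le> t\<close> \<open>0 \<le> \<delta>\<close> by (simp add: mult.assoc mult_left_mono)
  also have "\<dots> \<le> t * (\<Sum>j\<in>UNIV. x$j * w j)"
    using coercive[OF x] \<open>0 \<le> t\<close> by (rule mult_left_mono)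
  finally show ?thesis
    using \<open>0 \<le> x \<bullet> y\<close>
    by (simp add: inner_vec_def algebra_simps sum.distrib sum_subtractf sum_distrib_left)
qed

lemma LR_extension_off_cell:
  fixes v :: "'n::finite \<Rightarrow> int^'d::finite"
  assumes C: "C \<in> cells v w" and inj: "inj_on (rv v) C"
  obtains d :: "real^'n" where "(\<Sum>j\<in>UNIV. d$j *\<^sub>R rv v j) = 0" and "\<And>j. j \<in> -C \<Longrightarrow> d$j = h j"
proof -
  have "span (rv v ` C) = UNIV"
    using C by (blast elim: cellE)
  then have "- (\<Sum>j\<in>-C. h j *\<^sub>R rv v j) \<in> range (\<lambda>c. \<Sum>x\<in>rv v ` C. c x *\<^sub>R x)"
    using span_finite[of "rv v ` C"] by simp
  then obtain c where c: "- (\<Sum>j\<in>-C. h j *\<^sub>R rv v j) = (\<Sum>x\<in>rv v ` C. c x *\<^sub>R x)"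
    by (rule rangeE)
  define d where "d = (\<chi> j. if j \<in> C then c (rv v j) else h j)"
  have "(\<Sum>j\<in>UNIV. d$j *\<^sub>R rv v j) = (\<Sum>j\<in>C. c (rv v j) *\<^sub>R rv v j) + (\<Sum>j\<in>-C. h j *\<^sub>R rv v j)"
    unfolding sum_UNIV_split_Compl[of _ C] d_def by simp
  also have "\<dots> = 0"
    using c[symmetric] inj by (simp add: sum.reindex)
  finally show ?thesis
    using that[of d] by (simp add: d_def)
qed

lemma Lat_relation:
  assumes "l \<in> Lat v"
  shows "(\<Sum>j\<in>UNIV. l j * v j $ i) = 0"
proof -
  have "(\<chi> i. \<Sum>j\<in>UNIV. l j * v j $ i) = 0"
    using assms unfolding Lat_def by simp
  from arg_cong[OF this, of "\<lambda>x. x $ i"] show ?thesis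
    by simp
qed

lemma Lat_real_relation:
  assumes "l \<in> Lat v"
  shows "(\<Sum>j\<in>UNIV. of_int (l j) *\<^sub>R rv v j) = 0"
proof -
  have "(\<Sum>j\<in>UNIV. real_of_int (l j) * real_of_int (v j $ i)) = real_of_int (\<Sum>j\<in>UNIV. l j * v j $ i)" for i
    by simp
  then show ?thesis
    using Lat_relation[OF assms] by (simp add: vec_eq_iff rv_def ivec_def)
qed

lemma Lat_sum_eq_0:
  assumes "\<forall>j. hval hh (v j) = 1" and "l \<in> Lat v"
  shows "(\<Sum>j\<in>UNIV. l j) = 0"
proof -
  have "(\<Sum>j\<in>UNIV. l j) = (\<Sum>j\<in>UNIV. l j * hval hh (v j))"
    using assms(1) by simp
  also have "\<dots> = (\<Sum>i\<in>UNIV. hh$i * (\<Sum>j\<in>UNIV. l j * v j $ i))"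
    unfolding hval_def sum_distrib_left by (subst sum.swap) (simp add: algebra_simps)
  also have "\<dots> = 0"
    using Lat_relation[OF assms(2)] by simp
  finally show ?thesis .
qed

section \<open>Convergence of the Gamma series\<close>

lemma coef_summable_on:
  assumes "\<And>m. mono_nonzero v w b m \<Longrightarrow>
      (\<lambda>l. \<Prod>j\<in>UNIV. taylor_coeff (z j) (of_int (l j) + \<gamma> b j) (m j)) summable_on A"
  shows "(\<lambda>l. coef v w \<gamma> z b l u) summable_on A"
  unfolding coef_def
  using assms by (cases "finite {m. mono_nonzero v w b m \<and> ivec u = ivec b + (\<Sum>j\<in>UNIV. real (m j) *\<^sub>R rv v j)}")
    (auto intro!: summable_on_sum)

lemma mono_nonzero_cellE:
  fixes v :: "'n::finite \<Rightarrow> int^'d::finite"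
  assumes m: "mono_nonzero v w b m" and b: "box_wit v w C' q b" and g: "\<forall>j. g j - q j \<in> \<int>"
  obtains C where "C \<in> cells v w" and "\<And>j. j \<in> -C \<Longrightarrow> m j = 0 \<and> g j \<in> \<int>"
proof -
  obtain C where C: "C \<in> cells v w" and b_C: "poscomb v C (ivec b)"
    and m_C: "\<And>j. 0 < m j \<Longrightarrow> poscomb v C (rv v j)" and ray: "\<And>j. 0 < m j \<Longrightarrow> isray v w j"
    using m unfolding mono_nonzero_def by blast
  have "m j = 0" if "j \<in> -C" for j
  proof (rule ccontr)
    assume "m j \<noteq> 0"
    then obtain C'' where "C'' \<in> cells v w" "j \<in> C''"
      using ray unfolding isray_def by blast
    moreover obtain a where "\<forall>i\<in>C. 0 \<le> a i" "rv v j = (\<Sum>i\<in>C. a i *\<^sub>R rv v i)"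
      using m_C[of j] \<open>m j \<noteq> 0\<close> unfolding poscomb_def by auto
    moreover have "(\<Sum>i\<in>UNIV. (if i = j then 1 else 0) *\<^sub>R rv v i) = (\<Sum>i\<in>UNIV. if i = j then rv v i else 0)"
      by (rule sum.cong) auto
    then have "rv v j = (\<Sum>i\<in>UNIV. (if i = j then 1 else 0) *\<^sub>R rv v i)"
      by simp
    ultimately have "j \<in> C"
      by (intro cell_contains_support[OF C, of C'' a "\<lambda>i. if i = j then 1 else 0"]) auto
    with that show False by simp
  qed
  moreover have "g j \<in> \<int>" if "j \<in> -C" for j
  proof -
    obtain a where "\<forall>i\<in>C. 0 \<le> a i" "ivec b = (\<Sum>i\<in>C. a i *\<^sub>R rv v i)"
      using b_C unfolding poscomb_def by auto
    then have "q j = 0"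
      using b that cell_contains_support[OF C, of C' a q j] unfolding box_wit_def by auto
    then show ?thesis
      using g by (metis diff_zero)
  qed
  ultimately show ?thesis
    using that C by blast
qed

lemma norm_taylor_term_le_pow_half:
  fixes v :: "'n::finite \<Rightarrow> int^'d::finite"
  assumes h: "\<forall>j. hval hh (v j) = 1"
    and C: "C \<in> cells v w" and inj: "inj_on (rv v) C"
    and coercive: "\<And>x. x \<in> Ccone v C \<Longrightarrow> \<delta> * (\<Sum>j\<in>UNIV. \<bar>x$j\<bar>) \<le> (\<Sum>j\<in>UNIV. x$j * w j)"
    and "0 < \<delta>" and t: "t * \<delta> = (real CARD('n) + 2) * ln 2"
    and y: "y \<in> dualcone v w" and z: "\<And>j. - ln (cmod (z j)) = y$j + t * w j"
    and off_C: "\<And>j. j \<in> -C \<Longrightarrow> m j = 0 \<and> g j \<in> \<int>"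
  obtains B where "\<And>l. l \<in> Lat v \<Longrightarrow> norm (\<Prod>j\<in>UNIV. taylor_coeff (z j) (of_int (l j) + g j) (m j))
    \<le> B * (1/2) ^ (\<Sum>j\<in>UNIV. nat \<bar>l j\<bar>)"
proof -
  define T where "T l = (\<Prod>j\<in>UNIV. taylor_coeff (z j) (of_int (l j) + g j) (m j))" for l
  define S where "S l = (\<Sum>j\<in>UNIV. nat \<bar>l j\<bar>)" for l :: "'n \<Rightarrow> int"
  obtain K where "0 \<le> K" and K: "\<And>l. norm (T l)
      \<le> K * exp (\<Sum>j\<in>UNIV. of_int (l j) * ln (cmod (z j))) * 2 ^ S l * (\<Prod>j\<in>UNIV. rGamma_growth (l j))"
    unfolding T_def S_def using norm_prod_taylor_coeff_le[of z g m] by blast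
  obtain d where d_LR: "(\<Sum>j\<in>UNIV. d$j *\<^sub>R rv v j) = 0" and d: "\<And>j. j \<in> -C \<Longrightarrow> d$j = g j"
    using LR_extension_off_cell[OF C inj] by blast
  have "0 < t * \<delta>"
    unfolding t by (intro mult_pos_pos) auto
  with \<open>0 < \<delta>\<close> have "0 \<le> t"
    by (simp add: zero_less_mult_iff)
  define D where "D = d \<bullet> y + t * (\<delta> * (\<Sum>j\<in>UNIV. \<bar>d$j\<bar>) + (\<Sum>j\<in>UNIV. d$j * w j))"
  have "norm (T l) \<le> K * exp D * (1/2) ^ S l" if l: "l \<in> Lat v" for l
  proof (cases "\<exists>j\<in>-C. of_int (l j) + g j < 0")
    case True
    then obtain j where "j \<in> -C" and "of_int (l j) + g j < 0" by blast
    with off_C have "taylor_coeff (z j) (of_int (l j) + g j) (m j) = 0"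
      by (auto intro: taylor_coeff_0_eq_0)
    then have "T l = 0"
      unfolding T_def by (intro prod_zero) auto
    with \<open>0 \<le> K\<close> show ?thesis by simp
  next
    case False
    define x where "x = (\<chi> j. of_int (l j) + d$j)"
    have "x \<in> Ccone v C"
      using False d Lat_real_relation[OF l] d_LR
      by (auto simp: Ccone_def LR_def x_def scaleR_add_left sum.distrib not_less)
    from Ccone_shift_exponent_bound[OF coercive C y \<open>0 \<le> t\<close> _ this, of d] \<open>0 < \<delta>\<close>
    have "t * \<delta> * real (S l) - D \<le> (\<Sum>j\<in>UNIV. of_int (l j) * (y$j + t * w j))"
      by (simp add: x_def S_def D_def)
    also have "\<dots> = - (\<Sum>j\<in>UNIV. of_int (l j) * ln (cmod (z j)))"
      by (simp add: z[symmetric] sum_negf)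
    finally have "t * \<delta> * real (S l) - D \<le> - (\<Sum>j\<in>UNIV. of_int (l j) * ln (cmod (z j)))" .
    moreover have "t * \<delta> * real (S l) = real ((CARD('n) + 2) * S l) * ln 2"
      using t by (simp add: algebra_simps)
    ultimately have "(\<Sum>j\<in>UNIV. of_int (l j) * ln (cmod (z j))) \<le> D - real ((CARD('n) + 2) * S l) * ln 2"
      by simp
    moreover have "(\<Prod>j\<in>UNIV. rGamma_growth (l j)) \<le> 2 ^ (CARD('n) * S l)"
      unfolding S_def using Lat_sum_eq_0[OF h l] by (intro prod_rGamma_growth_le) auto
    ultimately have "K * exp (\<Sum>j\<in>UNIV. of_int (l j) * ln (cmod (z j))) * 2 ^ S l * (\<Prod>j\<in>UNIV. rGamma_growth (l j))
        \<le> K * exp D * (1/2) ^ S l"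
      using \<open>0 \<le> K\<close> by (intro pow_half_absorbs_growth prod_nonneg) (auto simp: rGamma_growth_nonneg)
    with K show ?thesis
      by (rule order_trans)
  qed
  then show ?thesis
    using that[of "K * exp D"] unfolding T_def S_def by blast
qed

theorem proposition2p12:
  fixes v :: "'n::finite \<Rightarrow> int^'d::finite"
    and hh :: "int^'d" and w :: "'n \<Rightarrow> real" and \<beta> :: "int^'d"
    and \<gamma> :: "int^'d \<Rightarrow> 'n \<Rightarrow> real"
  assumes "inj v"
    and "generates v"
    and "\<forall>j. hval hh (v j) = 1"
    and "regular_triangulation v w"
    and "\<forall>b\<in>Box v w. (\<forall>j. \<gamma> b j \<in> \<rat>) \<and> (\<Sum>j\<in>UNIV. \<gamma> b j *\<^sub>R rv v j) = ivec \<beta>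
            \<and> (\<exists>C q. box_wit v w C q b \<and> (\<forall>j. \<gamma> b j - q j \<in> \<int>))"
  shows "\<exists>c\<in>dualcone v w. \<forall>z\<in>Udom v w c. \<forall>b\<in>Box v w. \<forall>u::int^'d.
           (\<lambda>l. coef v w \<gamma> z b l u) summable_on Lat v"
proof -
  obtain \<delta> t where "0 < \<delta>" and t: "t * \<delta> = (real CARD('n) + 2) * ln 2"
    and c: "(\<chi> j. t * w j) \<in> dualcone v w" and coercive: "\<And>C x. C \<in> cells v w \<Longrightarrow>
      x \<in> Ccone v C \<Longrightarrow> \<delta> * (\<Sum>j\<in>UNIV. \<bar>x$j\<bar>) \<le> (\<Sum>j\<in>UNIV. x$j * w j)"
    using coercive_scaled_heights_in_dualcone[OF assms(4)] by blast
  show ?thesis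
  proof (intro bexI[OF _ c] ballI allI coef_summable_on)
    fix z b m
    assume z: "z \<in> Udom v w (\<chi> j. t * w j)" and b: "b \<in> Box v w" and m: "mono_nonzero v w b m"
    obtain y where y: "y \<in> dualcone v w" and z_y: "\<And>j. - ln (cmod (z j)) = y$j + t * w j"
      using z unfolding Udom_def by auto
    obtain C' q where "box_wit v w C' q b" and "\<forall>j. \<gamma> b j - q j \<in> \<int>"
      using assms(5) b by blast
    then obtain C where C: "C \<in> cells v w" and off_C: "\<And>j. j \<in> -C \<Longrightarrow> m j = 0 \<and> \<gamma> b j \<in> \<int>"
      using mono_nonzero_cellE[OF m] by blast
    have "inj_on (rv v) C"
      using assms(4) C unfolding regular_triangulation_def by blast
    then obtain B where "\<And>l. l \<in> Lat v \<Longrightarrow> norm (\<Prod>j\<in>UNIV. taylor_coeff (z j) (of_int (l j) + \<gamma> b j) (m j))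
        \<le> B * (1/2) ^ (\<Sum>j\<in>UNIV. nat \<bar>l j\<bar>)"
      using norm_taylor_term_le_pow_half[where g = "\<gamma> b", OF assms(3) C _ coercive[OF C] \<open>0 < \<delta>\<close> t y z_y off_C]
      by blast
    then show "(\<lambda>l. \<Prod>j\<in>UNIV. taylor_coeff (z j) (of_int (l j) + \<gamma> b j) (m j)) summable_on Lat v"
      by (rule summable_on_if_norm_le_pow_half)
  qed
qed

end
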